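(* Let $A$ be a finite set of $m$ alternatives and $N=\{1,\dots,n\}$ a set of agents, with preferences ranging over all weak orders on $A$. If there is an anonymous and neutral social decision scheme $f$ that satisfies efficiency and strategyproofness for $m$ alternatives and $n$ agents, then for all $m'\le m$ and $n'\le n$ there is a social decision scheme $f'$ defined for $m'$ alternatives and $n'$ agents that is also anonymous, neutral, efficient, and strategyproof.
   Context: $\mathcal{R}$ denotes the set of all complete and transitive binary relations (weak preferences) on $A$; a preference profile is $R=(\succsim_1,\dots,\succsim_n)\in\mathcal{R}^N$. $\Delta(A)=\{p\in\mathbb{R}_{\ge0}^A:\sum_{x\in A}p(x)=1\}$. A social decision scheme (SDS) is a function $f\colon\mathcal{R}^N\to\Delta(A)$. For $R\in\mathcal{R}^N$, $i\in N$ and $\succsim\in\mathcal{R}$, $R_{i:\succsim}$ denotes the profile obtained from $R$ by replacing $\succsim_i$ with $\succsim$. Anonymity: $f(R)=f(R\circ\sigma)$ for all $R$ and all permutations $\sigma$ of the agents. Neutrality: $f(R)(x)=f(\pi(R))(\pi(x))$ for all $R$, permutations $\pi$ of the alternatives and $x$, where $\pi(R)$ replaces each $\succsim_i$ by $\succsim_i^\pi$ with $\pi(x)\succsim_i^\pi\pi(y)$ iff $x\succsim_i y$. A utility function $u_i\colon A\to\mathbb{R}$ is consistent with $\succsim_i$ if $u_i(x)\ge u_i(y)\iff x\succsim_i y$, extended to lotteries by expectation. A utility representation $u$ assigns to each profile $R$ utility functions $u^R_i$ consistent with $\succsim_i$. Lottery $p$ $u$-dominates $q$ at $R$ if $u^R_i(p)\ge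 u^R_i(q)$ for all $i$, with strict inequality for some $i$. $f$ is efficient if for no profile $R$ is $f(R)$ $u$-dominated at $R$ for every utility representation $u$. $f$ is manipulable if there are $R$, $i$, $\succsim$ with $u^R_i(f(R_{i:\succsim}))>u^R_i(f(R))$ for every utility representation $u$; $f$ is strategyproof if it is not manipulable. *)

theory Defs
  imports Complex_Main "HOL-Combinatorics.Permutations"
begin

text \<open>A weak preference on A is a complete and transitive binary relation on A, given as a
set of pairs (x,y) meaning x is weakly preferred to y. A profile assigns a weak
preference to every agent in N (and, for extensionality, the empty relation outside N).\<close>

type_synonym pref = "(nat \<times> nat) set"
type_synonym profile = "nat \<Rightarrow> pref"
type_synonym lottery = "nat \<Rightarrow> real"

definition alts :: "nat \<Rightarrow> nat set" where "alts m = {0..<m}"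
definition agents :: "nat \<Rightarrow> nat set" where "agents n = {0..<n}"

definition weak_pref :: "nat set \<Rightarrow> pref \<Rightarrow> bool" where
  "weak_pref A r \<longleftrightarrow> r \<subseteq> A \<times> A \<and> (\<forall>x\<in>A. \<forall>y\<in>A. (x,y) \<in> r \<or> (y,x) \<in> r) \<and> trans r"

definition profiles :: "nat set \<Rightarrow> nat set \<Rightarrow> profile set" where
  "profiles N A = {R. (\<forall>i\<in>N. weak_pref A (R i)) \<and> (\<forall>i. i \<notin> N \<longrightarrow> R i = {})}"

definition lotteries :: "nat set \<Rightarrow> lottery set" where
  "lotteries A = {p. (\<forall>x. 0 \<le> p x) \<and> (\<forall>x. x \<notin> A \<longrightarrow> p x = 0) \<and> sum p A = 1}"

definition is_sds :: "nat set \<Rightarrow> nat set \<Rightarrow> (profile \<Rightarrow> lottery) \<Rightarrow> bool" where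
  "is_sds N A f \<longleftrightarrow> (\<forall>R\<in>profiles N A. f R \<in> lotteries A)"

definition anonymous :: "nat set \<Rightarrow> nat set \<Rightarrow> (profile \<Rightarrow> lottery) \<Rightarrow> bool" where
  "anonymous N A f \<longleftrightarrow> (\<forall>R\<in>profiles N A. \<forall>\<sigma>. \<sigma> permutes N \<longrightarrow> f (R \<circ> \<sigma>) = f R)"

definition permute_profile :: "(nat \<Rightarrow> nat) \<Rightarrow> profile \<Rightarrow> profile" where
  "permute_profile \<pi> R = (\<lambda>i. map_prod \<pi> \<pi> ` R i)"

definition neutral :: "nat set \<Rightarrow> nat set \<Rightarrow> (profile \<Rightarrow> lottery) \<Rightarrow> bool" where
  "neutral N A f \<longleftrightarrow> (\<forall>R\<in>profiles N A. \<forall>\<pi>. \<pi> permutes A \<longrightarrow>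
      (\<forall>x\<in>A. f R x = f (permute_profile \<pi> R) (\<pi> x)))"

definition consistent :: "nat set \<Rightarrow> pref \<Rightarrow> (nat \<Rightarrow> real) \<Rightarrow> bool" where
  "consistent A r u \<longleftrightarrow> (\<forall>x\<in>A. \<forall>y\<in>A. u x \<ge> u y \<longleftrightarrow> (x,y) \<in> r)"

definition EU :: "nat set \<Rightarrow> (nat \<Rightarrow> real) \<Rightarrow> lottery \<Rightarrow> real" where
  "EU A u p = (\<Sum>x\<in>A. u x * p x)"

definition util_rep :: "nat set \<Rightarrow> nat set \<Rightarrow> (profile \<Rightarrow> nat \<Rightarrow> nat \<Rightarrow> real) \<Rightarrow> bool" where
  "util_rep N A U \<longleftrightarrow> (\<forall>R\<in>profiles N A. \<forall>i\<in>N. consistent A (R i) (U R i))"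

definition u_dominates ::
  "nat set \<Rightarrow> nat set \<Rightarrow> (profile \<Rightarrow> nat \<Rightarrow> nat \<Rightarrow> real) \<Rightarrow> profile \<Rightarrow> lottery \<Rightarrow> lottery \<Rightarrow> bool" where
  "u_dominates N A U R p q \<longleftrightarrow>
     (\<forall>i\<in>N. EU A (U R i) p \<ge> EU A (U R i) q) \<and> (\<exists>i\<in>N. EU A (U R i) p > EU A (U R i) q)"

definition efficient :: "nat set \<Rightarrow> nat set \<Rightarrow> (profile \<Rightarrow> lottery) \<Rightarrow> bool" where
  "efficient N A f \<longleftrightarrow> \<not> (\<exists>R\<in>profiles N A. \<forall>U. util_rep N A U \<longrightarrow>
      (\<exists>p\<in>lotteries A. u_dominates N A U R p (f R)))"

definition manipulable :: "nat set \<Rightarrow> nat set \<Rightarrow> (profile \<Rightarrow> lottery) \<Rightarrow> bool" where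
  "manipulable N A f \<longleftrightarrow> (\<exists>R\<in>profiles N A. \<exists>i\<in>N. \<exists>r. weak_pref A r \<and>
      (\<forall>U. util_rep N A U \<longrightarrow> EU A (U R i) (f (R(i := r))) > EU A (U R i) (f R)))"

definition strategyproof :: "nat set \<Rightarrow> nat set \<Rightarrow> (profile \<Rightarrow> lottery) \<Rightarrow> bool" where
  "strategyproof N A f \<longleftrightarrow> \<not> manipulable N A f"

definition good_sds :: "nat \<Rightarrow> nat \<Rightarrow> (profile \<Rightarrow> lottery) \<Rightarrow> bool" where
  "good_sds m n f \<longleftrightarrow> is_sds (agents n) (alts m) f \<and> anonymous (agents n) (alts m) f \<and>
     neutral (agents n) (alts m) f \<and> efficient (agents n) (alts m) f \<and>
     strategyproof (agents n) (alts m) f"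

end

theory Submission
  imports Defs
begin

text \<open>Both reductions embed the small setting into the large one and read the scheme off
  there. Missing agents are added as completely indifferent between all alternatives: they
  are never made worse or better off, so dominance and manipulation transfer unchanged.
  Missing alternatives are appended, mutually indifferent, at the bottom of every preference.
  Efficiency then forces them to receive probability zero, so the restriction of the large
  scheme's lottery is again a lottery with the same expected utilities. Demoting needs at
  least one agent; with no agents the uniform lottery trivially has all four properties.\<close>

lemma EU_restrict:
  assumes "finite A" "A' \<subseteq> A" "\<forall>x\<in>A - A'. p x = 0" "\<forall>x\<in>A'. q x = p x"
  shows "EU A u p = EU A' u q"
proof -
  have "EU A u p = (\<Sum>x\<in>A'. u x * p x)" unfolding EU_def
    by (rule sum.mono_neutral_right) (use assms in auto)
  also have "\<dots> = EU A' u q" unfolding EU_def using assms(4) by simp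
  finally show ?thesis .
qed

lemma EU_const_utility:
  assumes "\<forall>x\<in>A. u x = c" "p \<in> lotteries A"
  shows "EU A u p = c"
proof -
  have "EU A u p = c * sum p A" unfolding EU_def
    using assms(1) by (simp add: sum_distrib_left)
  then show ?thesis using assms(2) by (simp add: lotteries_def)
qed

lemma EU_indifferent:
  assumes "\<forall>x\<in>A. \<forall>y\<in>A. u x = u y" "p \<in> lotteries A" "q \<in> lotteries A"
  shows "EU A u p = EU A u q"
proof (cases "A = {}")
  case True
  then show ?thesis by (simp add: EU_def)
next
  case False
  then obtain a where "a \<in> A" by blast
  with assms(1) have "\<forall>x\<in>A. u x = u a" by blast
  with assms(2,3) show ?thesis by (simp add: EU_const_utility)
qed

lemma transfer_mass_eq:
  fixes p :: lottery
  shows "a \<noteq> b \<Longrightarrow> p(a := p a + p b, b := 0) =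
     (\<lambda>x. p x + (if x = a then p b else 0) - (if x = b then p b else 0))"
  by (auto simp: fun_eq_iff)

lemma EU_transfer_mass:
  assumes "finite A" "a \<in> A" "b \<in> A" "a \<noteq> b"
  shows "EU A u (p(a := p a + p b, b := 0)) = EU A u p + p b * (u a - u b)"
proof -
  have "EU A u (p(a := p a + p b, b := 0)) =
      (\<Sum>x\<in>A. u x * p x + (if x = a then u a * p b else 0) - (if x = b then u b * p b else 0))"
    unfolding EU_def transfer_mass_eq[OF assms(4)] by (intro sum.cong) (auto simp: algebra_simps)
  also have "\<dots> = EU A u p + p b * (u a - u b)"
    using assms by (simp add: sum_subtractf sum.distrib EU_def algebra_simps)
  finally show ?thesis .
qed

lemma transfer_mass_lotteries:
  assumes "p \<in> lotteries A" "finite A" "a \<in> A" "b \<in> A" "a \<noteq> b"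
  shows "p(a := p a + p b, b := 0) \<in> lotteries A"
proof -
  have "sum (p(a := p a + p b, b := 0)) A = sum p A"
    using assms(2-4) by (simp add: transfer_mass_eq[OF assms(5)] sum_subtractf sum.distrib)
  then show ?thesis using assms(1,3,4) by (auto simp: lotteries_def)
qed

text \<open>Shifting the probability of an alternative b onto an alternative a that every agent
  strictly prefers to b is a Pareto improvement for every utility representation.\<close>
lemma efficient_dominated_alt_zero:
  assumes eff: "efficient N A f" and sds: "is_sds N A f" and "finite A" "N \<noteq> {}"
    and R: "R \<in> profiles N A" and "a \<in> A" "b \<in> A"
    and pref: "\<forall>i\<in>N. (a, b) \<in> R i \<and> (b, a) \<notin> R i"
  shows "f R b = 0"
proof (rule ccontr)
  assume "f R b \<noteq> 0"
  have lot: "f R \<in> lotteries A" using sds R by (simp add: is_sds_def)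
  with \<open>f R b \<noteq> 0\<close> have pos: "f R b > 0" by (auto simp: lotteries_def less_le)
  have "a \<noteq> b" using pref \<open>N \<noteq> {}\<close> by auto
  let ?p = "(f R)(a := f R a + f R b, b := 0)"
  have "u_dominates N A U R ?p (f R)" if U: "util_rep N A U" for U
  proof -
    have "EU A (U R i) ?p > EU A (U R i) (f R)" if i: "i \<in> N" for i
    proof -
      have "consistent A (R i) (U R i)" using U R i by (simp add: util_rep_def)
      then have "U R i a > U R i b" using pref i assms(6,7) unfolding consistent_def by force
      then show ?thesis using pos EU_transfer_mass[OF assms(3,6,7) \<open>a \<noteq> b\<close>] by simp
    qed
    then show ?thesis using \<open>N \<noteq> {}\<close> unfolding u_dominates_def by (blast intro: less_imp_le)
  qed
  moreover have "?p \<in> lotteries A"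
    using transfer_mass_lotteries[OF lot assms(3,6,7) \<open>a \<noteq> b\<close>] .
  ultimately show False using eff R unfolding efficient_def by blast
qed

definition pad_agents :: "nat set \<Rightarrow> nat set \<Rightarrow> nat set \<Rightarrow> profile \<Rightarrow> profile" where
  "pad_agents N' N A R = (\<lambda>i. if i \<in> N' then R i else if i \<in> N then A \<times> A else {})"

lemma weak_pref_indifferent: "weak_pref A (A \<times> A)"
  by (auto simp: weak_pref_def trans_def)

lemma consistent_indifferent:
  "consistent A (A \<times> A) u \<Longrightarrow> \<forall>x\<in>A. \<forall>y\<in>A. u x = u y"
  unfolding consistent_def by (meson SigmaI order.antisym)

lemma pad_agents_profiles:
  "N' \<subseteq> N \<Longrightarrow> R \<in> profiles N' A \<Longrightarrow> pad_agents N' N A R \<in> profiles N A"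
  using weak_pref_indifferent[of A] by (auto simp: profiles_def pad_agents_def)

lemma pad_agents_fun_upd:
  "i \<in> N' \<Longrightarrow> pad_agents N' N A (R(i := r)) = (pad_agents N' N A R)(i := r)"
  by (auto simp: pad_agents_def fun_eq_iff)

lemma pad_agents_comp_permutes:
  assumes "\<sigma> permutes N'"
  shows "pad_agents N' N A (R \<circ> \<sigma>) = pad_agents N' N A R \<circ> \<sigma>"
proof
  fix i
  show "pad_agents N' N A (R \<circ> \<sigma>) i = (pad_agents N' N A R \<circ> \<sigma>) i"
    using permutes_in_image[OF assms, of i] permutes_not_in[OF assms, of i]
    by (cases "i \<in> N'") (simp_all add: pad_agents_def)
qed

lemma permute_profile_pad_agents:
  assumes "\<pi> permutes A"
  shows "permute_profile \<pi> (pad_agents N' N A R) = pad_agents N' N A (permute_profile \<pi> R)"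
proof -
  have "map_prod \<pi> \<pi> ` (A \<times> A) = A \<times> A"
    by (rule map_prod_surj_on) (simp_all add: permutes_image[OF assms])
  then show ?thesis by (simp add: permute_profile_def pad_agents_def fun_eq_iff)
qed

lemma util_rep_pad_agents:
  assumes "N' \<subseteq> N" "util_rep N A U"
  shows "util_rep N' A (\<lambda>R. U (pad_agents N' N A R))"
  unfolding util_rep_def
proof (intro ballI)
  fix R i assume R: "R \<in> profiles N' A" and i: "i \<in> N'"
  have "consistent A (pad_agents N' N A R i) (U (pad_agents N' N A R) i)"
    using assms pad_agents_profiles[OF assms(1) R] i by (auto simp: util_rep_def)
  then show "consistent A (R i) (U (pad_agents N' N A R) i)"
    using i by (simp add: pad_agents_def)
qed

context
  fixes N' N A :: "nat set" and f :: "profile \<Rightarrow> lottery"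
  assumes subset: "N' \<subseteq> N"
begin

lemma is_sds_pad_agents: "is_sds N A f \<Longrightarrow> is_sds N' A (f \<circ> pad_agents N' N A)"
  using pad_agents_profiles[OF subset] by (auto simp: is_sds_def)

lemma anonymous_pad_agents:
  assumes "anonymous N A f"
  shows "anonymous N' A (f \<circ> pad_agents N' N A)"
proof (unfold anonymous_def, intro ballI allI impI)
  fix R \<sigma> assume R: "R \<in> profiles N' A" and \<sigma>: "\<sigma> permutes N'"
  have "f (pad_agents N' N A R \<circ> \<sigma>) = f (pad_agents N' N A R)"
    using assms pad_agents_profiles[OF subset R] permutes_subset[OF \<sigma> subset]
    unfolding anonymous_def by blast
  then show "(f \<circ> pad_agents N' N A) (R \<circ> \<sigma>) = (f \<circ> pad_agents N' N A) R"
    by (simp add: pad_agents_comp_permutes[OF \<sigma>])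
qed

lemma neutral_pad_agents:
  assumes "neutral N A f"
  shows "neutral N' A (f \<circ> pad_agents N' N A)"
proof (unfold neutral_def, intro ballI allI impI)
  fix R \<pi> x assume R: "R \<in> profiles N' A" and \<pi>: "\<pi> permutes A" and x: "x \<in> A"
  have "f (pad_agents N' N A R) x = f (permute_profile \<pi> (pad_agents N' N A R)) (\<pi> x)"
    using assms pad_agents_profiles[OF subset R] \<pi> x unfolding neutral_def by blast
  then show "(f \<circ> pad_agents N' N A) R x = (f \<circ> pad_agents N' N A) (permute_profile \<pi> R) (\<pi> x)"
    by (simp add: permute_profile_pad_agents[OF \<pi>])
qed

lemma efficient_pad_agents:
  assumes eff: "efficient N A f" and sds: "is_sds N A f"
  shows "efficient N' A (f \<circ> pad_agents N' N A)"
  unfolding efficient_def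
proof
  assume "\<exists>R\<in>profiles N' A. \<forall>U. util_rep N' A U \<longrightarrow>
      (\<exists>p\<in>lotteries A. u_dominates N' A U R p ((f \<circ> pad_agents N' N A) R))"
  then obtain R where R: "R \<in> profiles N' A" and dom: "\<And>U. util_rep N' A U \<Longrightarrow>
      \<exists>p\<in>lotteries A. u_dominates N' A U R p (f (pad_agents N' N A R))" by auto
  define R\<^sub>N where "R\<^sub>N = pad_agents N' N A R"
  have RN: "R\<^sub>N \<in> profiles N A" using pad_agents_profiles[OF subset R] by (simp add: R\<^sub>N_def)
  have "\<exists>p\<in>lotteries A. u_dominates N A U R\<^sub>N p (f R\<^sub>N)" if U: "util_rep N A U" for U
  proof -
    obtain p where p: "p \<in> lotteries A"
      and d: "u_dominates N' A (\<lambda>R. U (pad_agents N' N A R)) R p (f R\<^sub>N)"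
      using dom[OF util_rep_pad_agents[OF subset U]] by (auto simp: R\<^sub>N_def)
    have "EU A (U R\<^sub>N i) p \<ge> EU A (U R\<^sub>N i) (f R\<^sub>N)" if i: "i \<in> N" for i
    proof (cases "i \<in> N'")
      case True
      then show ?thesis using d by (simp add: u_dominates_def R\<^sub>N_def)
    next
      case False
      have "consistent A (R\<^sub>N i) (U R\<^sub>N i)" using U RN i by (simp add: util_rep_def)
      moreover have "R\<^sub>N i = A \<times> A" using i False by (simp add: R\<^sub>N_def pad_agents_def)
      ultimately have "\<forall>x\<in>A. \<forall>y\<in>A. U R\<^sub>N i x = U R\<^sub>N i y"
        using consistent_indifferent by simp
      then have "EU A (U R\<^sub>N i) p = EU A (U R\<^sub>N i) (f R\<^sub>N)"
        using EU_indifferent p sds RN unfolding is_sds_def by blast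
      then show ?thesis by simp
    qed
    moreover obtain i where "i \<in> N'" "EU A (U R\<^sub>N i) p > EU A (U R\<^sub>N i) (f R\<^sub>N)"
      using d by (auto simp: u_dominates_def R\<^sub>N_def)
    ultimately have "u_dominates N A U R\<^sub>N p (f R\<^sub>N)"
      using subset unfolding u_dominates_def by blast
    with p show ?thesis by blast
  qed
  then show False using eff RN unfolding efficient_def by blast
qed

lemma strategyproof_pad_agents:
  "strategyproof N A f \<Longrightarrow> strategyproof N' A (f \<circ> pad_agents N' N A)"
  unfolding strategyproof_def manipulable_def
proof (elim contrapos_nn bexE exE conjE)
  fix R i r
  assume R: "R \<in> profiles N' A" and i: "i \<in> N'" and r: "weak_pref A r"
    and gain: "\<forall>U. util_rep N' A U \<longrightarrow> EU A (U R i) ((f \<circ> pad_agents N' N A) (R(i := r)))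
        > EU A (U R i) ((f \<circ> pad_agents N' N A) R)"
  have "EU A (U (pad_agents N' N A R) i) (f ((pad_agents N' N A R)(i := r)))
      > EU A (U (pad_agents N' N A R) i) (f (pad_agents N' N A R))" if U: "util_rep N A U" for U
    using gain[rule_format, OF util_rep_pad_agents[OF subset U]]
    by (simp add: pad_agents_fun_upd[OF i])
  then show "\<exists>R\<in>profiles N A. \<exists>i\<in>N. \<exists>r. weak_pref A r \<and>
      (\<forall>U. util_rep N A U \<longrightarrow> EU A (U R i) (f (R(i := r))) > EU A (U R i) (f R))"
    using pad_agents_profiles[OF subset R] i r subset by blast
qed

end

definition demote_outside :: "nat set \<Rightarrow> nat set \<Rightarrow> nat set \<Rightarrow> profile \<Rightarrow> profile" where
  "demote_outside N A' A R = (\<lambda>i. if i \<in> N then R i \<union> A \<times> (A - A') else {})"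

definition restrict_lottery :: "nat set \<Rightarrow> lottery \<Rightarrow> lottery" where
  "restrict_lottery A' p = (\<lambda>x. if x \<in> A' then p x else 0)"

lemma weak_pref_demote_outside:
  assumes "weak_pref A' r" "A' \<subseteq> A"
  shows "weak_pref A (r \<union> A \<times> (A - A'))"
proof -
  have sub: "r \<subseteq> A' \<times> A'" and tr: "trans r" using assms(1) by (auto simp: weak_pref_def)
  have "trans (r \<union> A \<times> (A - A'))"
  proof (rule transI)
    fix x y z assume xy: "(x, y) \<in> r \<union> A \<times> (A - A')" and yz: "(y, z) \<in> r \<union> A \<times> (A - A')"
    show "(x, z) \<in> r \<union> A \<times> (A - A')"
    proof (cases "z \<in> A'")
      case False
      then show ?thesis using xy yz sub assms(2) by blast
    next
      case True
      then have "(y, z) \<in> r" "(x, y) \<in> r" using xy yz sub by blast+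
      then show ?thesis using tr by (meson UnI1 transD)
    qed
  qed
  then show ?thesis using assms unfolding weak_pref_def by blast
qed

lemma demote_outside_profiles:
  "A' \<subseteq> A \<Longrightarrow> R \<in> profiles N A' \<Longrightarrow> demote_outside N A' A R \<in> profiles N A"
  using weak_pref_demote_outside by (auto simp: profiles_def demote_outside_def)

lemma demote_outside_fun_upd:
  "i \<in> N \<Longrightarrow> demote_outside N A' A (R(i := r)) =
     (demote_outside N A' A R)(i := r \<union> A \<times> (A - A'))"
  by (auto simp: demote_outside_def fun_eq_iff)

lemma demote_outside_comp_permutes:
  assumes "\<sigma> permutes N"
  shows "demote_outside N A' A (R \<circ> \<sigma>) = demote_outside N A' A R \<circ> \<sigma>"
proof
  fix i
  show "demote_outside N A' A (R \<circ> \<sigma>) i = (demote_outside N A' A R \<circ> \<sigma>) i"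
    using permutes_in_image[OF assms, of i] permutes_not_in[OF assms, of i]
    by (cases "i \<in> N") (simp_all add: demote_outside_def)
qed

lemma permute_profile_demote_outside:
  assumes "\<pi> permutes A'" "A' \<subseteq> A"
  shows "permute_profile \<pi> (demote_outside N A' A R) = demote_outside N A' A (permute_profile \<pi> R)"
proof -
  have "\<pi> ` (A - A') = A - A'"
    using permutes_not_in[OF assms(1)] by (metis DiffD2 image_cong image_ident)
  then have "map_prod \<pi> \<pi> ` (A \<times> (A - A')) = A \<times> (A - A')"
    by (intro map_prod_surj_on) (simp_all add: permutes_image[OF permutes_subset[OF assms]])
  then show ?thesis by (simp add: permute_profile_def demote_outside_def image_Un fun_eq_iff)
qed

lemma util_rep_demote_outside:
  assumes "A' \<subseteq> A" "util_rep N A U"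
  shows "util_rep N A' (\<lambda>R. U (demote_outside N A' A R))"
  unfolding util_rep_def
proof (intro ballI)
  fix R i assume R: "R \<in> profiles N A'" and i: "i \<in> N"
  have "consistent A (demote_outside N A' A R i) (U (demote_outside N A' A R) i)"
    using assms demote_outside_profiles[OF assms(1) R] i by (auto simp: util_rep_def)
  then show "consistent A' (R i) (U (demote_outside N A' A R) i)"
    using i assms(1) unfolding consistent_def demote_outside_def by auto
qed

lemma lotteries_mono:
  assumes "A' \<subseteq> A" "finite A"
  shows "lotteries A' \<subseteq> lotteries A"
proof
  fix p assume p: "p \<in> lotteries A'"
  have "sum p A' = sum p A"
    by (rule sum.mono_neutral_left) (use assms p in \<open>auto simp: lotteries_def\<close>)
  then show "p \<in> lotteries A" using p assms(1) by (auto simp: lotteries_def)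
qed

context
  fixes N A' A :: "nat set" and f :: "profile \<Rightarrow> lottery"
  assumes subset: "A' \<subseteq> A"
begin

lemma anonymous_demote_outside:
  assumes "anonymous N A f"
  shows "anonymous N A' (restrict_lottery A' \<circ> f \<circ> demote_outside N A' A)"
proof (unfold anonymous_def, intro ballI allI impI)
  fix R \<sigma> assume R: "R \<in> profiles N A'" and \<sigma>: "\<sigma> permutes N"
  have "f (demote_outside N A' A R \<circ> \<sigma>) = f (demote_outside N A' A R)"
    using assms demote_outside_profiles[OF subset R] \<sigma> unfolding anonymous_def by blast
  then show "(restrict_lottery A' \<circ> f \<circ> demote_outside N A' A) (R \<circ> \<sigma>) =
      (restrict_lottery A' \<circ> f \<circ> demote_outside N A' A) R"
    by (simp add: demote_outside_comp_permutes[OF \<sigma>])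
qed

lemma neutral_demote_outside:
  assumes "neutral N A f"
  shows "neutral N A' (restrict_lottery A' \<circ> f \<circ> demote_outside N A' A)"
proof (unfold neutral_def, intro ballI allI impI)
  fix R \<pi> x assume R: "R \<in> profiles N A'" and \<pi>: "\<pi> permutes A'" and x: "x \<in> A'"
  have "f (demote_outside N A' A R) x = f (permute_profile \<pi> (demote_outside N A' A R)) (\<pi> x)"
    using assms demote_outside_profiles[OF subset R] permutes_subset[OF \<pi> subset] x subset
    unfolding neutral_def by blast
  moreover have "\<pi> x \<in> A'" using x permutes_in_image[OF \<pi>] by blast
  ultimately show "(restrict_lottery A' \<circ> f \<circ> demote_outside N A' A) R x =
      (restrict_lottery A' \<circ> f \<circ> demote_outside N A' A) (permute_profile \<pi> R) (\<pi> x)"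
    using x by (simp add: restrict_lottery_def permute_profile_demote_outside[OF \<pi> subset])
qed

context
  assumes fin: "finite A" and agents_ne: "N \<noteq> {}" and alts_ne: "A' \<noteq> {}"
    and sds: "is_sds N A f" and eff: "efficient N A f"
begin

text \<open>Every agent strictly prefers any alternative of A' to any demoted one, so by
  efficiency the demoted alternatives receive no probability.\<close>
lemma demote_outside_zero:
  assumes R: "R \<in> profiles N A'" and b: "b \<in> A - A'"
  shows "f (demote_outside N A' A R) b = 0"
proof -
  obtain a where a: "a \<in> A'" using alts_ne by blast
  have "R i \<subseteq> A' \<times> A'" if "i \<in> N" for i
    using R that by (auto simp: profiles_def weak_pref_def)
  then have "\<forall>i\<in>N. (a, b) \<in> demote_outside N A' A R i \<and> (b, a) \<notin> demote_outside N A' A R i"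
    using a b subset by (auto simp: demote_outside_def)
  then show ?thesis
    using efficient_dominated_alt_zero[OF eff sds fin agents_ne demote_outside_profiles[OF subset R]]
      a b subset by blast
qed

lemma EU_demote_outside:
  assumes "R \<in> profiles N A'"
  shows "EU A u (f (demote_outside N A' A R)) =
    EU A' u ((restrict_lottery A' \<circ> f \<circ> demote_outside N A' A) R)"
  by (rule EU_restrict) (use fin subset demote_outside_zero[OF assms] in \<open>auto simp: restrict_lottery_def\<close>)

lemma is_sds_demote_outside: "is_sds N A' (restrict_lottery A' \<circ> f \<circ> demote_outside N A' A)"
  unfolding is_sds_def
proof
  fix R assume R: "R \<in> profiles N A'"
  let ?p = "f (demote_outside N A' A R)"
  have p: "?p \<in> lotteries A" using sds demote_outside_profiles[OF subset R] by (simp add: is_sds_def)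
  have "sum ?p A' = sum ?p A"
    by (rule sum.mono_neutral_left) (use fin subset demote_outside_zero[OF R] in auto)
  then show "(restrict_lottery A' \<circ> f \<circ> demote_outside N A' A) R \<in> lotteries A'"
    using p by (auto simp: lotteries_def restrict_lottery_def)
qed

lemma efficient_demote_outside: "efficient N A' (restrict_lottery A' \<circ> f \<circ> demote_outside N A' A)"
  unfolding efficient_def
proof
  let ?g = "restrict_lottery A' \<circ> f \<circ> demote_outside N A' A"
  assume "\<exists>R\<in>profiles N A'. \<forall>U. util_rep N A' U \<longrightarrow> (\<exists>p\<in>lotteries A'. u_dominates N A' U R p (?g R))"
  then obtain R where R: "R \<in> profiles N A'"
    and dom: "\<And>U. util_rep N A' U \<Longrightarrow> \<exists>p\<in>lotteries A'. u_dominates N A' U R p (?g R)" by blast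
  define R\<^sub>A where "R\<^sub>A = demote_outside N A' A R"
  have "\<exists>p\<in>lotteries A. u_dominates N A U R\<^sub>A p (f R\<^sub>A)" if U: "util_rep N A U" for U
  proof -
    obtain p where p: "p \<in> lotteries A'"
      and d: "u_dominates N A' (\<lambda>R. U (demote_outside N A' A R)) R p (?g R)"
      using dom[OF util_rep_demote_outside[OF subset U]] by blast
    have EU_p: "EU A u p = EU A' u p" for u
      by (rule EU_restrict) (use fin subset p in \<open>auto simp: lotteries_def\<close>)
    have "u_dominates N A U R\<^sub>A p (f R\<^sub>A)"
      using d unfolding u_dominates_def R\<^sub>A_def EU_demote_outside[OF R] EU_p .
    then show ?thesis using p lotteries_mono[OF subset fin] by blast
  qed
  then show False using eff demote_outside_profiles[OF subset R] unfolding efficient_def R\<^sub>A_def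
    by blast
qed

lemma strategyproof_demote_outside:
  "strategyproof N A f \<Longrightarrow> strategyproof N A' (restrict_lottery A' \<circ> f \<circ> demote_outside N A' A)"
  unfolding strategyproof_def manipulable_def
proof (elim contrapos_nn bexE exE conjE)
  let ?g = "restrict_lottery A' \<circ> f \<circ> demote_outside N A' A"
  fix R i r
  assume R: "R \<in> profiles N A'" and i: "i \<in> N" and r: "weak_pref A' r"
    and gain: "\<forall>U. util_rep N A' U \<longrightarrow> EU A' (U R i) (?g (R(i := r))) > EU A' (U R i) (?g R)"
  define R\<^sub>A where "R\<^sub>A = demote_outside N A' A R"
  define r\<^sub>A where "r\<^sub>A = r \<union> A \<times> (A - A')"
  have R': "R(i := r) \<in> profiles N A'" using R r i by (auto simp: profiles_def)
  have "EU A (U R\<^sub>A i) (f (R\<^sub>A(i := r\<^sub>A))) > EU A (U R\<^sub>A i) (f R\<^sub>A)" if U: "util_rep N A U" for U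
    using gain[rule_format, OF util_rep_demote_outside[OF subset U]]
      EU_demote_outside[OF R'] EU_demote_outside[OF R]
    by (simp add: R\<^sub>A_def r\<^sub>A_def demote_outside_fun_upd[OF i])
  moreover have "weak_pref A r\<^sub>A" using weak_pref_demote_outside[OF r subset] by (simp add: r\<^sub>A_def)
  ultimately show "\<exists>R\<in>profiles N A. \<exists>i\<in>N. \<exists>r. weak_pref A r \<and>
      (\<forall>U. util_rep N A U \<longrightarrow> EU A (U R i) (f (R(i := r))) > EU A (U R i) (f R))"
    using demote_outside_profiles[OF subset R] i unfolding R\<^sub>A_def by blast
qed

end

end

lemma good_sds_fewer_agents:
  assumes "good_sds m n f" "n' \<le> n"
  shows "good_sds m n' (f \<circ> pad_agents (agents n') (agents n) (alts m))"
proof -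
  have N: "agents n' \<subseteq> agents n" using assms(2) by (auto simp: agents_def)
  from assms(1) show ?thesis
    unfolding good_sds_def
    using is_sds_pad_agents[OF N] anonymous_pad_agents[OF N] neutral_pad_agents[OF N]
      efficient_pad_agents[OF N] strategyproof_pad_agents[OF N]
    by simp
qed

lemma good_sds_fewer_alts:
  assumes "good_sds m n f" "1 \<le> n" "1 \<le> m'" "m' \<le> m"
  shows "good_sds m' n (restrict_lottery (alts m') \<circ> f \<circ> demote_outside (agents n) (alts m') (alts m))"
proof -
  have A: "alts m' \<subseteq> alts m" and hyps: "finite (alts m)" "agents n \<noteq> {}" "alts m' \<noteq> {}"
    using assms(2-4) by (auto simp: alts_def agents_def)
  from assms(1) show ?thesis
    unfolding good_sds_def
    using anonymous_demote_outside[OF A] neutral_demote_outside[OF A]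
      is_sds_demote_outside[OF A hyps] efficient_demote_outside[OF A hyps]
      strategyproof_demote_outside[OF A hyps]
    by simp
qed

lemma good_sds_no_agents:
  assumes "1 \<le> m"
  shows "good_sds m 0 (\<lambda>_ x. if x \<in> alts m then 1 / real m else 0)"
proof -
  have "agents 0 = {}" by (simp add: agents_def)
  moreover have "(\<lambda>x. if x \<in> alts m then 1 / real m else 0) \<in> lotteries (alts m)"
    using assms by (simp add: lotteries_def alts_def)
  moreover have "neutral (agents 0) (alts m) (\<lambda>_ x. if x \<in> alts m then 1 / real m else 0)"
    unfolding neutral_def by (auto simp: permutes_in_image)
  ultimately show ?thesis
    by (simp add: good_sds_def is_sds_def anonymous_def efficient_def u_dominates_def
        strategyproof_def manipulable_def util_rep_def)
qed

theorem lemma4p1: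
  fixes m n m' n' :: nat
  assumes "\<exists>f. good_sds m n f"
    and "1 \<le> m'" and "m' \<le> m" and "n' \<le> n"
  shows "\<exists>f'. good_sds m' n' f'"
proof (cases "n' = 0")
  case True
  then show ?thesis using good_sds_no_agents[OF assms(2)] by blast
next
  case False
  obtain f where "good_sds m n f" using assms(1) by blast
  then have "good_sds m' n (restrict_lottery (alts m') \<circ> f \<circ> demote_outside (agents n) (alts m') (alts m))"
    using good_sds_fewer_alts False assms(2-4) by simp
  then show ?thesis using good_sds_fewer_agents[OF _ assms(4)] by blast
qed

end
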